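(* Let $n\in\mathbb N$, $1<p<n$, let $\Omega\subseteq\mathbb R^n$ be open, $w\in C^3(\Omega)$ positive, and $\mathscr V:\mathbb R^n\to[0,+\infty)$ of class $C^3(\mathbb R^n\setminus\{0\})$. Set $$\mathsf P=\frac{n(p-1)}{w}\,\mathscr V(\nabla w)+\Big(\frac{p}{n-p}\Big)^{p-1}\frac1w,$$ $\mathsf a(\nabla w)=\nabla_\xi\mathscr V(\nabla w)$, $\mathsf A=(\tilde\alpha_{ij})$ with $\tilde\alpha_{ij}=\partial_{\xi_i\xi_j}\mathscr V(\nabla w)$, and $\mathscr W=\nabla\mathsf a(\nabla w)$, i.e. $\mathscr W_{ik}=\partial_k\big(\mathsf a_i(\nabla w)\big)$. Then in $\Omega\setminus\{x\in\Omega:\nabla w(x)=0\}$ the following identity holds (summation over repeated indices): $$\operatorname{div}\big(w^{2-n}\mathsf A\nabla\mathsf P\big)=w^{1-n}\Big\{-n\langle\mathsf A\nabla\mathsf P,\nabla w\rangle-\mathsf P\operatorname{tr}\mathscr W+n(p-1)\big[\operatorname{tr}\mathscr W^2+\langle\nabla(\operatorname{tr}\mathscr W),\mathsf a(\nabla w)\rangle\big]-\mathsf P\,w_j\,\partial_{\xi_i\xi_j\xi_k}\mathscr V(\nabla w)\,w_{ki}\Big\}.$$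
   Context: $w_j=\partial_jw$, $w_{ki}=\partial_{ki}w$; $\partial_{\xi_i\xi_j\xi_k}\mathscr V$ denotes third partial derivatives of $\mathscr V$ with respect to its argument $\xi\in\mathbb R^n$. *)

theory Defs
  imports "HOL-Analysis.Analysis"
begin

definition pd :: "'n::finite \<Rightarrow> (real^'n \<Rightarrow> real) \<Rightarrow> real^'n \<Rightarrow> real" where
  "pd i f x = deriv (\<lambda>t. f (x + t *\<^sub>R axis i 1)) 0"

definition grad :: "(real^'n::finite \<Rightarrow> real) \<Rightarrow> real^'n \<Rightarrow> real^'n" where
  "grad f x = (\<chi> i. pd i f x)"

fun Ck :: "nat \<Rightarrow> (real^'n::finite \<Rightarrow> real) \<Rightarrow> (real^'n) set \<Rightarrow> bool" where
  "Ck 0 f U = continuous_on U f"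
| "Ck (Suc k) f U = (continuous_on U f \<and>
      (\<forall>i. \<forall>x\<in>U. (\<lambda>t. f (x + t *\<^sub>R axis i 1)) differentiable (at 0)) \<and>
      (\<forall>i. Ck k (pd i f) U))"

end

theory Submission
  imports Defs
begin

text \<open>
  Away from the critical set of w the chain rule through
  the gradient gives w \<nabla>P = n(p-1) D^2 w a(\<nabla>w) - P \<nabla>w, so \<nabla>P and its derivatives are
  expressed through the 3-jets of w at x and of V at \<nabla>w(x). Differentiating w^(2-n) A\<nabla>P by the
  product, quotient and chain rules and regrouping the contractions with the help of the symmetry
  of second and third derivatives (Schwarz) produces tr \<W>^2, \<langle>\<nabla> tr \<W>, a\<rangle> and the term with the
  third derivatives of V; the two terms containing \<langle>A\<nabla>P, \<nabla>w\<rangle> add up to the coefficient -n.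
\<close>

section \<open>Partial derivatives along the coordinate axes\<close>

text \<open>
  Since pd is defined through deriv, it carries no information where the line derivative does not
  exist. Calculus rules are therefore stated for the relation has_partial_deriv and transferred to pd
  by pd_eqI.
\<close>

definition has_partial_deriv :: "'n::finite \<Rightarrow> (real^'n \<Rightarrow> real) \<Rightarrow> real^'n \<Rightarrow> real \<Rightarrow> bool" where
  "has_partial_deriv i f y D \<longleftrightarrow> ((\<lambda>t. f (y + t *\<^sub>R axis i 1)) has_real_derivative D) (at 0)"

definition has_partials_on :: "(real^'n::finite \<Rightarrow> real) \<Rightarrow> (real^'n) set \<Rightarrow> bool" where
  "has_partials_on f U \<longleftrightarrow> (\<forall>i. \<forall>z\<in>U. (\<lambda>t. f (z + t *\<^sub>R axis i 1)) differentiable (at 0))"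

lemma pd_eqI: "has_partial_deriv i f y D \<Longrightarrow> pd i f y = D"
  unfolding has_partial_deriv_def pd_def by (rule DERIV_imp_deriv)

lemma has_partial_deriv_pd:
  "has_partials_on f U \<Longrightarrow> y \<in> U \<Longrightarrow> has_partial_deriv i f y (pd i f y)"
  unfolding has_partials_on_def has_partial_deriv_def pd_def
  using DERIV_deriv_iff_real_differentiable by blast

lemma has_partial_deriv_const: "has_partial_deriv i (\<lambda>y. c) y 0"
  unfolding has_partial_deriv_def by simp

lemma has_partial_deriv_add:
  "has_partial_deriv i f y D \<Longrightarrow> has_partial_deriv i g y E \<Longrightarrow>
   has_partial_deriv i (\<lambda>y. f y + g y) y (D + E)"
  unfolding has_partial_deriv_def by (rule DERIV_add)

lemma has_partial_deriv_diff:
  "has_partial_deriv i f y D \<Longrightarrow> has_partial_deriv i g y E \<Longrightarrow>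
   has_partial_deriv i (\<lambda>y. f y - g y) y (D - E)"
  unfolding has_partial_deriv_def by (rule DERIV_diff)

lemma has_partial_deriv_mult:
  "has_partial_deriv i f y D \<Longrightarrow> has_partial_deriv i g y E \<Longrightarrow>
   has_partial_deriv i (\<lambda>y. f y * g y) y (D * g y + f y * E)"
  unfolding has_partial_deriv_def by (drule (1) DERIV_mult) (simp add: mult.commute)

lemma has_partial_deriv_cmult:
  "has_partial_deriv i f y D \<Longrightarrow> has_partial_deriv i (\<lambda>y. c * f y) y (c * D)"
  unfolding has_partial_deriv_def by (rule DERIV_cmult)

lemma has_partial_deriv_divide:
  "has_partial_deriv i f y D \<Longrightarrow> has_partial_deriv i g y E \<Longrightarrow> g y \<noteq> 0 \<Longrightarrow>
   has_partial_deriv i (\<lambda>y. f y / g y) y ((D * g y - f y * E) / (g y * g y))"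
  unfolding has_partial_deriv_def by (drule (1) DERIV_divide) simp_all

lemma has_partial_deriv_sum:
  "finite S \<Longrightarrow> (\<And>k. k \<in> S \<Longrightarrow> has_partial_deriv i (f k) y (D k)) \<Longrightarrow>
   has_partial_deriv i (\<lambda>y. \<Sum>k\<in>S. f k y) y (\<Sum>k\<in>S. D k)"
  unfolding has_partial_deriv_def by (rule DERIV_sum)

lemma has_partial_deriv_powr:
  "has_partial_deriv i f y D \<Longrightarrow> f y > 0 \<Longrightarrow>
   has_partial_deriv i (\<lambda>y. f y powr e) y (e * f y powr (e - 1) * D)"
  unfolding has_partial_deriv_def
  apply (drule DERIV_powr[where f = "\<lambda>_. e" and r = 0])
    apply simp
   apply simp
  apply (simp add: powr_diff mult_ac)
  done

lemma has_partial_deriv_transform_within_open: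
  assumes "has_partial_deriv i f y D" "open N" "y \<in> N" "\<And>z. z \<in> N \<Longrightarrow> f z = g z"
  shows "has_partial_deriv i g y D"
proof -
  have "open ((\<lambda>t. y + t *\<^sub>R axis i (1::real)) -` N)"
    using assms(2) by (intro continuous_open_vimage) (auto intro!: continuous_intros)
  then have "\<forall>\<^sub>F t in nhds 0. y + t *\<^sub>R axis i 1 \<in> N"
    using eventually_nhds_in_open assms(3) by fastforce
  then have "\<forall>\<^sub>F t in nhds 0. f (y + t *\<^sub>R axis i 1) = g (y + t *\<^sub>R axis i 1)"
    by eventually_elim (use assms(4) in auto)
  from DERIV_cong_ev[OF refl this refl] show ?thesis
    using assms(1) unfolding has_partial_deriv_def by simp
qed

lemma has_partial_deriv_chain:
  fixes F :: "real^'n::finite \<Rightarrow> real" and G :: "real^'n \<Rightarrow> real^'n"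
  assumes F: "(F has_derivative (\<lambda>h. \<Sum>k\<in>UNIV. h $ k * DF k)) (at (G y))"
    and G: "\<And>k. has_partial_deriv i (\<lambda>y. G y $ k) y (DG k)"
  shows "has_partial_deriv i (\<lambda>y. F (G y)) y (\<Sum>k\<in>UNIV. DF k * DG k)"
proof -
  let ?g = "\<lambda>t. G (y + t *\<^sub>R axis i 1)"
  have "((\<lambda>t. ?g t $ k) has_derivative (\<lambda>t. t * DG k)) (at 0)" for k
  proof -
    have "(\<lambda>t. t * DG k) = (*) (DG k)"
      by (auto simp: fun_eq_iff)
    then show ?thesis
      using G[of k] unfolding has_partial_deriv_def has_field_derivative_def by simp
  qed
  then have vd: "(?g has_vector_derivative (\<chi> k. DG k)) (at 0)"
    unfolding has_vector_derivative_def
    by (subst has_derivative_componentwise_within) (auto simp: Basis_vec_def inner_axis)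
  have "(F has_derivative (\<lambda>h. \<Sum>k\<in>UNIV. h $ k * DF k)) (at (?g 0) within range ?g)"
    using F by (simp add: has_derivative_at_withinI)
  from vector_derivative_diff_chain_within[where S = UNIV, OF vd this]
  have "((F \<circ> ?g) has_vector_derivative (\<Sum>k\<in>UNIV. DG k * DF k)) (at 0)"
    by simp
  then show ?thesis
    unfolding has_partial_deriv_def has_real_derivative_iff_has_vector_derivative
    by (simp add: o_def mult.commute)
qed

section \<open>Functions with continuous partial derivatives\<close>

lemma MVT_abs:
  fixes g g' :: "real \<Rightarrow> real"
  assumes "\<And>t. \<bar>t\<bar> \<le> \<bar>b\<bar> \<Longrightarrow> (g has_real_derivative g' t) (at t)"
  obtains \<theta> where "\<bar>\<theta>\<bar> \<le> \<bar>b\<bar>" "g b - g 0 = b * g' \<theta>"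
proof (cases b "0::real" rule: linorder_cases)
  case less
  then obtain z where "b < z" "z < 0" "g 0 - g b = (0 - b) * g' z"
    using MVT2[OF less, of g g'] assms by force
  then show ?thesis by (intro that[of z]) auto
next
  case greater
  then obtain z where "0 < z" "z < b" "g b - g 0 = (b - 0) * g' z"
    using MVT2[OF greater, of g g'] assms by force
  then show ?thesis by (intro that[of z]) auto
qed (use that in auto)

lemma has_real_derivative_along_axis:
  assumes "has_partials_on f U" "z + t *\<^sub>R axis i 1 \<in> U"
  shows "((\<lambda>s. f (z + s *\<^sub>R axis i 1)) has_real_derivative pd i f (z + t *\<^sub>R axis i 1)) (at t)"
proof -
  have "((\<lambda>s. f (z + (s + t) *\<^sub>R axis i 1)) has_real_derivative pd i f (z + t *\<^sub>R axis i 1)) (at 0)"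
    using has_partial_deriv_pd[OF assms, of i]
    unfolding has_partial_deriv_def by (simp add: scaleR_add_left add_ac)
  then show ?thesis using DERIV_shift[of "\<lambda>s. f (z + s *\<^sub>R axis i 1)" _ 0 t] by simp
qed

lemma sum_axis_nth:
  "finite S \<Longrightarrow> (\<Sum>i\<in>S. h $ i * axis i (1::real) $ k) = (if k \<in> S then h $ k else 0)"
proof -
  have "h $ i * (if k = i then 1 else 0) = (if k = i then h $ k else 0)" for i
    by simp
  then show "finite S \<Longrightarrow> ?thesis" by (simp add: axis_def)
qed

lemma axis_increment_estimate:
  fixes f :: "real^'n::finite \<Rightarrow> real"
  assumes "open U" "x \<in> U" "has_partials_on f U" "continuous_on U (pd j f)" "e > 0"
  obtains d where "d > 0"
    "\<And>z s. (\<And>t. \<bar>t\<bar> \<le> \<bar>s\<bar> \<Longrightarrow> dist (z + t *\<^sub>R axis j 1) x < d) \<Longrightarrow>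
       \<bar>f (z + s *\<^sub>R axis j 1) - f z - s * pd j f x\<bar> \<le> e * \<bar>s\<bar>"
proof -
  obtain d0 where d0: "d0 > 0" "ball x d0 \<subseteq> U"
    using assms(1,2) open_contains_ball by blast
  obtain d2 where d2: "d2 > 0" "\<And>z. z \<in> U \<Longrightarrow> dist z x < d2 \<Longrightarrow> dist (pd j f z) (pd j f x) < e"
    using assms(2,4,5) unfolding continuous_on_iff by blast
  show ?thesis
  proof (rule that[of "min d0 d2"])
    fix z s
    assume near: "\<And>t. \<bar>t\<bar> \<le> \<bar>s\<bar> \<Longrightarrow> dist (z + t *\<^sub>R axis j 1) x < min d0 d2"
    have inU: "z + t *\<^sub>R axis j 1 \<in> U" if "\<bar>t\<bar> \<le> \<bar>s\<bar>" for t
      using near[OF that] d0(2) by (auto simp: dist_commute)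
    obtain \<theta> where \<theta>: "\<bar>\<theta>\<bar> \<le> \<bar>s\<bar>"
      "f (z + s *\<^sub>R axis j 1) - f (z + 0 *\<^sub>R axis j 1) = s * pd j f (z + \<theta> *\<^sub>R axis j 1)"
      using MVT_abs[of s "\<lambda>t. f (z + t *\<^sub>R axis j 1)" "\<lambda>t. pd j f (z + t *\<^sub>R axis j 1)"]
        has_real_derivative_along_axis[OF assms(3) inU] by blast
    have "\<bar>pd j f (z + \<theta> *\<^sub>R axis j 1) - pd j f x\<bar> \<le> e"
      using d2(2)[OF inU[OF \<theta>(1)]] near[OF \<theta>(1)] by (simp add: dist_real_def)
    then have "\<bar>s\<bar> * \<bar>pd j f (z + \<theta> *\<^sub>R axis j 1) - pd j f x\<bar> \<le> \<bar>s\<bar> * e"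
      by (rule mult_left_mono) simp
    then show "\<bar>f (z + s *\<^sub>R axis j 1) - f z - s * pd j f x\<bar> \<le> e * \<bar>s\<bar>"
      using \<theta>(2) by (simp add: abs_mult[symmetric] right_diff_distrib mult.commute)
  qed (use d0 d2 in simp)
qed

lemma axis_sum_increment_estimate:
  fixes f :: "real^'n::finite \<Rightarrow> real" and S :: "'n set"
  assumes U: "open U" "x \<in> U" and partials: "has_partials_on f U"
    and cont: "\<And>i. continuous_on U (pd i f)" and "e > 0"
  shows "\<exists>d>0. \<forall>h. norm h < d \<longrightarrow>
    \<bar>f (x + (\<Sum>i\<in>S. h $ i *\<^sub>R axis i 1)) - f x - (\<Sum>i\<in>S. h $ i * pd i f x)\<bar> \<le> e * norm h"
  using finite assms(5)
proof (induction S arbitrary: e rule: finite_induct)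
  case (insert j S)
  obtain d1 where d1: "d1 > 0" "\<And>h. norm h < d1 \<Longrightarrow>
      \<bar>f (x + (\<Sum>i\<in>S. h $ i *\<^sub>R axis i 1)) - f x - (\<Sum>i\<in>S. h $ i * pd i f x)\<bar> \<le> e/2 * norm h"
    using insert.IH[of "e/2"] insert.prems by auto
  obtain d2 where d2: "d2 > 0" "\<And>z s. (\<And>t. \<bar>t\<bar> \<le> \<bar>s\<bar> \<Longrightarrow> dist (z + t *\<^sub>R axis j 1) x < d2) \<Longrightarrow>
      \<bar>f (z + s *\<^sub>R axis j 1) - f z - s * pd j f x\<bar> \<le> e/2 * \<bar>s\<bar>"
    using axis_increment_estimate[OF U partials cont, of "e/2" j] insert.prems by auto
  have "\<bar>f (x + (\<Sum>i\<in>insert j S. h $ i *\<^sub>R axis i 1)) - f x - (\<Sum>i\<in>insert j S. h $ i * pd i f x)\<bar> \<le> e * norm h"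
    if h: "norm h < min d1 d2" for h
  proof -
    define z where "z = x + (\<Sum>i\<in>S. h $ i *\<^sub>R axis i 1)"
    have "dist (z + t *\<^sub>R axis j 1) x < d2" if "\<bar>t\<bar> \<le> \<bar>h $ j\<bar>" for t
    proof -
      have "norm ((\<Sum>i\<in>S. h $ i *\<^sub>R axis i 1) + t *\<^sub>R axis j (1::real)) \<le> norm h"
      proof (rule norm_le_componentwise_cart)
        show "norm (((\<Sum>i\<in>S. h $ i *\<^sub>R axis i 1) + t *\<^sub>R axis j (1::real)) $ k) \<le> norm (h $ k)" for k
          using that insert.hyps by (cases "k = j") (auto simp: sum_axis_nth axis_def[of j])
      qed
      then show ?thesis using h by (simp add: z_def dist_norm)
    qed
    then have step: "\<bar>f (z + h $ j *\<^sub>R axis j 1) - f z - h $ j * pd j f x\<bar> \<le> e/2 * norm h"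
      using d2(2) component_le_norm_cart[of h j] insert.prems
      by (meson mult_left_mono order_trans half_gt_zero less_imp_le)
    have rest: "\<bar>f z - f x - (\<Sum>i\<in>S. h $ i * pd i f x)\<bar> \<le> e/2 * norm h"
      using d1(2) h by (simp add: z_def)
    have "f (x + (\<Sum>i\<in>insert j S. h $ i *\<^sub>R axis i 1)) - f x - (\<Sum>i\<in>insert j S. h $ i * pd i f x)
        = (f (z + h $ j *\<^sub>R axis j 1) - f z - h $ j * pd j f x) + (f z - f x - (\<Sum>i\<in>S. h $ i * pd i f x))"
      using insert.hyps by (simp add: z_def add_ac)
    then show ?thesis
      using abs_triangle_ineq[of "f (z + h $ j *\<^sub>R axis j 1) - f z - h $ j * pd j f x"] step rest
      by linarith
  qed
  then show ?case using d1(1) d2(1) by (intro exI[of _ "min d1 d2"]) auto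
qed (auto intro: exI[of _ 1])

lemma has_derivative_if_continuous_partials:
  fixes f :: "real^'n::finite \<Rightarrow> real"
  assumes U: "open U" "x \<in> U" and partials: "has_partials_on f U"
    and cont: "\<And>i. continuous_on U (pd i f)"
  shows "(f has_derivative (\<lambda>h. \<Sum>i\<in>UNIV. h $ i * pd i f x)) (at x)"
  unfolding has_derivative_at_alt
proof (intro conjI allI impI)
  show "bounded_linear (\<lambda>h::real^'n. \<Sum>i\<in>UNIV. h $ i * pd i f x)"
    unfolding linear_conv_bounded_linear[symmetric]
    by (rule linearI) (simp_all add: sum.distrib algebra_simps sum_distrib_left)
  have "(\<Sum>i\<in>UNIV. h $ i *\<^sub>R axis i (1::real)) = h" for h :: "real^'n"
    by (simp add: vec_eq_iff sum_axis_nth)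
  moreover fix e :: real assume "e > 0"
  ultimately obtain d where d: "d > 0" "\<And>h. norm h < d \<Longrightarrow>
      \<bar>f (x + h) - f x - (\<Sum>i\<in>UNIV. h $ i * pd i f x)\<bar> \<le> e * norm h"
    using axis_sum_increment_estimate[OF U partials cont, of e UNIV] by auto
  show "\<exists>d>0. \<forall>y. norm (y - x) < d \<longrightarrow>
      norm (f y - f x - (\<Sum>i\<in>UNIV. (y - x) $ i * pd i f x)) \<le> e * norm (y - x)"
  proof (intro exI[of _ d] conjI allI impI)
    fix y assume "norm (y - x) < d"
    then show "norm (f y - f x - (\<Sum>i\<in>UNIV. (y - x) $ i * pd i f x)) \<le> e * norm (y - x)"
      using d(2)[of "y - x"] by simp
  qed (rule d(1))
qed

lemma second_difference_MVT:
  fixes f :: "real^'n::finite \<Rightarrow> real"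
  assumes partials: "has_partials_on f U" "has_partials_on (pd i f) U"
    and inU: "\<And>t r. \<bar>t\<bar> \<le> \<bar>s\<bar> \<Longrightarrow> \<bar>r\<bar> \<le> \<bar>s\<bar> \<Longrightarrow> x + t *\<^sub>R axis i 1 + r *\<^sub>R axis j 1 \<in> U"
  obtains t r where "\<bar>t\<bar> \<le> \<bar>s\<bar>" "\<bar>r\<bar> \<le> \<bar>s\<bar>"
    "f (x + s *\<^sub>R axis j 1 + s *\<^sub>R axis i 1) - f (x + s *\<^sub>R axis i 1) - f (x + s *\<^sub>R axis j 1) + f x
      = s\<^sup>2 * pd j (pd i f) (x + t *\<^sub>R axis i 1 + r *\<^sub>R axis j 1)"
proof -
  define g where "g t = f (x + s *\<^sub>R axis j 1 + t *\<^sub>R axis i 1) - f (x + t *\<^sub>R axis i 1)" for t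
  have "(g has_real_derivative
      pd i f (x + s *\<^sub>R axis j 1 + t *\<^sub>R axis i 1) - pd i f (x + t *\<^sub>R axis i 1)) (at t)"
    if "\<bar>t\<bar> \<le> \<bar>s\<bar>" for t
    unfolding g_def using inU[OF that, of s] inU[OF that, of 0]
    by (intro DERIV_diff has_real_derivative_along_axis[OF partials(1)]) (simp_all add: add_ac)
  then obtain t where t: "\<bar>t\<bar> \<le> \<bar>s\<bar>"
    "g s - g 0 = s * (pd i f (x + s *\<^sub>R axis j 1 + t *\<^sub>R axis i 1) - pd i f (x + t *\<^sub>R axis i 1))"
    by (rule MVT_abs)
  define h where "h r = pd i f (x + t *\<^sub>R axis i 1 + r *\<^sub>R axis j 1)" for r
  have "(h has_real_derivative pd j (pd i f) (x + t *\<^sub>R axis i 1 + r *\<^sub>R axis j 1)) (at r)"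
    if "\<bar>r\<bar> \<le> \<bar>s\<bar>" for r
    unfolding h_def by (rule has_real_derivative_along_axis[OF partials(2) inU[OF t(1) that]])
  then obtain r where r: "\<bar>r\<bar> \<le> \<bar>s\<bar>"
    "h s - h 0 = s * pd j (pd i f) (x + t *\<^sub>R axis i 1 + r *\<^sub>R axis j 1)"
    by (rule MVT_abs)
  have "f (x + s *\<^sub>R axis j 1 + s *\<^sub>R axis i 1) - f (x + s *\<^sub>R axis i 1) - f (x + s *\<^sub>R axis j 1) + f x
      = g s - g 0"
    by (simp add: g_def)
  also have "\<dots> = s * (h s - h 0)"
    unfolding t(2) h_def by (simp add: add_ac)
  also have "\<dots> = s\<^sup>2 * pd j (pd i f) (x + t *\<^sub>R axis i 1 + r *\<^sub>R axis j 1)"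
    unfolding r(2) by (simp add: power2_eq_square)
  finally show ?thesis using t(1) r(1) that by blast
qed

lemma second_difference_tendsto:
  fixes f :: "real^'n::finite \<Rightarrow> real"
  assumes "open U" "x \<in> U" "has_partials_on f U" "has_partials_on (pd i f) U"
    and "continuous_on U (pd j (pd i f))"
  shows "((\<lambda>s. (f (x + s *\<^sub>R axis j 1 + s *\<^sub>R axis i 1) - f (x + s *\<^sub>R axis i 1)
             - f (x + s *\<^sub>R axis j 1) + f x) / s\<^sup>2) \<longlongrightarrow> pd j (pd i f) x) (at 0)"
proof (rule LIM_I)
  fix e :: real assume "e > 0"
  obtain d0 where d0: "d0 > 0" "ball x d0 \<subseteq> U"
    using assms(1,2) open_contains_ball by blast
  obtain d2 where d2: "d2 > 0"
    "\<And>z. z \<in> U \<Longrightarrow> dist z x < d2 \<Longrightarrow> dist (pd j (pd i f) z) (pd j (pd i f) x) < e"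
    using assms(2,5) \<open>e > 0\<close> unfolding continuous_on_iff by blast
  have "norm ((f (x + s *\<^sub>R axis j 1 + s *\<^sub>R axis i 1) - f (x + s *\<^sub>R axis i 1)
             - f (x + s *\<^sub>R axis j 1) + f x) / s\<^sup>2 - pd j (pd i f) x) < e"
    if s: "s \<noteq> 0" "norm (s - 0) < min d0 d2 / 2" for s
  proof -
    have near: "x + t *\<^sub>R axis i 1 + r *\<^sub>R axis j 1 \<in> U \<and> dist (x + t *\<^sub>R axis i 1 + r *\<^sub>R axis j 1) x < d2"
      if "\<bar>t\<bar> \<le> \<bar>s\<bar>" "\<bar>r\<bar> \<le> \<bar>s\<bar>" for t r
    proof -
      have "norm (t *\<^sub>R axis i (1::real) + r *\<^sub>R axis j 1) \<le> \<bar>t\<bar> + \<bar>r\<bar>"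
        by (rule order_trans[OF norm_triangle_ineq]) simp
      also have "\<dots> < min d0 d2" using that s by simp
      finally have "dist (x + t *\<^sub>R axis i 1 + r *\<^sub>R axis j 1) x < min d0 d2"
        by (simp add: dist_norm add.assoc)
      then show ?thesis using d0(2) by (auto simp: dist_commute)
    qed
    obtain t r where tr: "\<bar>t\<bar> \<le> \<bar>s\<bar>" "\<bar>r\<bar> \<le> \<bar>s\<bar>"
      "f (x + s *\<^sub>R axis j 1 + s *\<^sub>R axis i 1) - f (x + s *\<^sub>R axis i 1) - f (x + s *\<^sub>R axis j 1) + f x
        = s\<^sup>2 * pd j (pd i f) (x + t *\<^sub>R axis i 1 + r *\<^sub>R axis j 1)"
      using second_difference_MVT[OF assms(3,4)] near by blast
    then show ?thesis
      using d2(2) near[OF tr(1,2)] s(1) by (simp add: dist_real_def)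
  qed
  then show "\<exists>d>0. \<forall>s. s \<noteq> 0 \<and> norm (s - 0) < d \<longrightarrow>
      norm ((f (x + s *\<^sub>R axis j 1 + s *\<^sub>R axis i 1) - f (x + s *\<^sub>R axis i 1)
             - f (x + s *\<^sub>R axis j 1) + f x) / s\<^sup>2 - pd j (pd i f) x) < e"
    using d0(1) d2(1) by (intro exI[of _ "min d0 d2 / 2"]) auto
qed

text \<open>Schwarz: both mixed partials are the limit of the same second difference quotient.\<close>

lemma pd_commute:
  fixes f :: "real^'n::finite \<Rightarrow> real"
  assumes "open U" "x \<in> U" "has_partials_on f U" "\<And>k. has_partials_on (pd k f) U"
    and "\<And>k l. continuous_on U (pd l (pd k f))"
  shows "pd j (pd i f) x = pd i (pd j f) x"
proof (rule tendsto_unique[OF at_neq_bot])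
  show "((\<lambda>s. (f (x + s *\<^sub>R axis j 1 + s *\<^sub>R axis i 1) - f (x + s *\<^sub>R axis i 1)
             - f (x + s *\<^sub>R axis j 1) + f x) / s\<^sup>2) \<longlongrightarrow> pd j (pd i f) x) (at 0)"
    using second_difference_tendsto assms by blast
  show "((\<lambda>s. (f (x + s *\<^sub>R axis j 1 + s *\<^sub>R axis i 1) - f (x + s *\<^sub>R axis i 1)
             - f (x + s *\<^sub>R axis j 1) + f x) / s\<^sup>2) \<longlongrightarrow> pd i (pd j f) x) (at 0)"
    using second_difference_tendsto[OF assms(1-3) assms(4,5), of i j] by (simp add: algebra_simps)
qed

lemma Ck_continuous_on: "Ck k f U \<Longrightarrow> continuous_on U f"
  by (cases k) simp_all

lemma Ck_has_partials_on: "Ck k f U \<Longrightarrow> 0 < k \<Longrightarrow> has_partials_on f U"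
  by (cases k) (simp_all add: has_partials_on_def)

lemma Ck_pd: "Ck k f U \<Longrightarrow> 0 < k \<Longrightarrow> Ck (k - 1) (pd i f) U"
  by (cases k) simp_all

lemma Ck_has_partial_deriv: "Ck k f U \<Longrightarrow> 0 < k \<Longrightarrow> y \<in> U \<Longrightarrow> has_partial_deriv i f y (pd i f y)"
  using Ck_has_partials_on has_partial_deriv_pd by blast

lemma Ck_has_derivative:
  "Ck k f U \<Longrightarrow> 0 < k \<Longrightarrow> open U \<Longrightarrow> x \<in> U \<Longrightarrow>
   (f has_derivative (\<lambda>h. \<Sum>i\<in>UNIV. h $ i * pd i f x)) (at x)"
  by (intro has_derivative_if_continuous_partials Ck_has_partials_on Ck_continuous_on[OF Ck_pd])

lemma Ck_pd_commute:
  "Ck k f U \<Longrightarrow> 2 \<le> k \<Longrightarrow> open U \<Longrightarrow> x \<in> U \<Longrightarrow> pd j (pd i f) x = pd i (pd j f) x"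
  by (intro pd_commute Ck_has_partials_on Ck_has_partials_on[OF Ck_pd]
      Ck_continuous_on[OF Ck_pd[OF Ck_pd]]) auto

lemma Ck_pd3_commute:
  assumes "Ck k f U" "3 \<le> k" "open U" "x \<in> U"
  shows "pd l (pd j (pd i f)) x = pd l (pd i (pd j f)) x"
proof -
  have "has_partials_on (pd j (pd i f)) U"
    using assms(1,2) by (intro Ck_has_partials_on[OF Ck_pd[OF Ck_pd]]) auto
  then have "has_partial_deriv l (pd j (pd i f)) x (pd l (pd j (pd i f)) x)"
    using assms(4) by (rule has_partial_deriv_pd)
  then have "has_partial_deriv l (pd i (pd j f)) x (pd l (pd j (pd i f)) x)"
    by (rule has_partial_deriv_transform_within_open[OF _ assms(3,4)])
      (use Ck_pd_commute[OF assms(1) _ assms(3)] assms(2) in auto)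
  then show ?thesis by (rule pd_eqI[symmetric])
qed

section \<open>Index contractions of symmetric tensors\<close>

lemma trace_square_contraction:
  fixes B C :: "'n::finite \<Rightarrow> 'n \<Rightarrow> real"
  assumes B: "\<And>a b. B a b = B b a" and C: "\<And>a b. C a b = C b a"
  shows "(\<Sum>i\<in>UNIV. \<Sum>j\<in>UNIV. B j i * (\<Sum>k\<in>UNIV. (\<Sum>r\<in>UNIV. B k r * C r i) * C k j))
       = (\<Sum>i\<in>UNIV. \<Sum>k\<in>UNIV. (\<Sum>m\<in>UNIV. B i m * C m k) * (\<Sum>m\<in>UNIV. B k m * C m i))"
proof -
  have relabel: "B j i * (B k r * C r i * C k j) = B i j * C j k * (B k r * C r i)" for i j k r
    using B[of j i] C[of k j] by simp
  have "(\<Sum>i\<in>UNIV. \<Sum>j\<in>UNIV. B j i * (\<Sum>k\<in>UNIV. (\<Sum>r\<in>UNIV. B k r * C r i) * C k j))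
      = (\<Sum>i\<in>UNIV. \<Sum>j\<in>UNIV. \<Sum>k\<in>UNIV. \<Sum>r\<in>UNIV. B j i * (B k r * C r i * C k j))"
    by (simp only: sum_distrib_left sum_distrib_right)
  also have "\<dots> = (\<Sum>i\<in>UNIV. \<Sum>k\<in>UNIV. \<Sum>j\<in>UNIV. \<Sum>r\<in>UNIV. B j i * (B k r * C r i * C k j))"
    by (rule sum.cong[OF refl], rule sum.swap)
  also have "\<dots> = (\<Sum>i\<in>UNIV. \<Sum>k\<in>UNIV. \<Sum>j\<in>UNIV. \<Sum>r\<in>UNIV. B i j * C j k * (B k r * C r i))"
    by (simp only: relabel)
  also have "\<dots> = (\<Sum>i\<in>UNIV. \<Sum>k\<in>UNIV. \<Sum>r\<in>UNIV. \<Sum>j\<in>UNIV. B i j * C j k * (B k r * C r i))"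
    by (rule sum.cong[OF refl], rule sum.cong[OF refl], rule sum.swap)
  also have "\<dots> = (\<Sum>i\<in>UNIV. \<Sum>k\<in>UNIV. (\<Sum>m\<in>UNIV. B i m * C m k) * (\<Sum>m\<in>UNIV. B k m * C m i))"
    by (simp only: sum_distrib_left sum_distrib_right)
  finally show ?thesis .
qed

lemma hessian_third_contraction:
  fixes B :: "'n::finite \<Rightarrow> 'n \<Rightarrow> real" and T :: "'n \<Rightarrow> 'n \<Rightarrow> 'n \<Rightarrow> real"
  assumes B: "\<And>a b. B a b = B b a"
    and T: "\<And>a b c. T a b c = T b a c" "\<And>a b c. T a b c = T a c b"
  shows "(\<Sum>i\<in>UNIV. \<Sum>j\<in>UNIV. B j i * (\<Sum>k\<in>UNIV. v k * T k j i))
       = (\<Sum>i\<in>UNIV. (\<Sum>l\<in>UNIV. \<Sum>m\<in>UNIV. B l m * T m l i) * v i)"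
proof -
  have relabel: "B j i * (v k * T k j i) = B i j * T j i k * v k" for i j k
    using B[of j i] T(1)[of k j i] T(2)[of j k i] T(1)[of j i k] by simp
  have "(\<Sum>i\<in>UNIV. \<Sum>j\<in>UNIV. B j i * (\<Sum>k\<in>UNIV. v k * T k j i))
      = (\<Sum>i\<in>UNIV. \<Sum>j\<in>UNIV. \<Sum>k\<in>UNIV. B j i * (v k * T k j i))"
    by (simp only: sum_distrib_left)
  also have "\<dots> = (\<Sum>i\<in>UNIV. \<Sum>k\<in>UNIV. \<Sum>j\<in>UNIV. B j i * (v k * T k j i))"
    by (rule sum.cong[OF refl], rule sum.swap)
  also have "\<dots> = (\<Sum>k\<in>UNIV. \<Sum>i\<in>UNIV. \<Sum>j\<in>UNIV. B i j * T j i k * v k)"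
    by (subst sum.swap) (simp only: relabel)
  also have "\<dots> = (\<Sum>i\<in>UNIV. (\<Sum>l\<in>UNIV. \<Sum>m\<in>UNIV. B l m * T m l i) * v i)"
    by (simp only: sum_distrib_right)
  finally show ?thesis .
qed

lemma third_hessian_contraction:
  fixes C :: "'n::finite \<Rightarrow> 'n \<Rightarrow> real" and T :: "'n \<Rightarrow> 'n \<Rightarrow> 'n \<Rightarrow> real"
  assumes C: "\<And>a b. C a b = C b a"
    and T: "\<And>a b c. T a b c = T b a c" "\<And>a b c. T a b c = T a c b"
  shows "(\<Sum>i\<in>UNIV. \<Sum>j\<in>UNIV. (\<Sum>k\<in>UNIV. T j i k * C k i) * (\<Sum>l\<in>UNIV. v l * C l j))
       = (\<Sum>i\<in>UNIV. (\<Sum>l\<in>UNIV. \<Sum>m\<in>UNIV. (\<Sum>r\<in>UNIV. T l m r * C r i) * C m l) * v i)"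
proof -
  have relabel: "T j i k * C k i * (v l * C l j) = T i k j * C j l * C k i * v l" for i j k l
    using C[of l j] T(1)[of j i k] T(2)[of i j k] by simp
  have "(\<Sum>i\<in>UNIV. \<Sum>j\<in>UNIV. (\<Sum>k\<in>UNIV. T j i k * C k i) * (\<Sum>l\<in>UNIV. v l * C l j))
      = (\<Sum>i\<in>UNIV. \<Sum>j\<in>UNIV. \<Sum>l\<in>UNIV. \<Sum>k\<in>UNIV. T j i k * C k i * (v l * C l j))"
    by (simp only: sum_distrib_left sum_distrib_right)
  also have "\<dots> = (\<Sum>l\<in>UNIV. \<Sum>i\<in>UNIV. \<Sum>k\<in>UNIV. \<Sum>j\<in>UNIV. T j i k * C k i * (v l * C l j))"
    by (subst sum.swap, subst sum.swap, rule sum.cong[OF refl], rule sum.cong[OF refl], rule sum.swap)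
  also have "\<dots> = (\<Sum>l\<in>UNIV. \<Sum>i\<in>UNIV. \<Sum>k\<in>UNIV. \<Sum>j\<in>UNIV. T i k j * C j l * C k i * v l)"
    by (simp only: relabel)
  also have "\<dots> = (\<Sum>i\<in>UNIV. (\<Sum>l\<in>UNIV. \<Sum>m\<in>UNIV. (\<Sum>r\<in>UNIV. T l m r * C r i) * C m l) * v i)"
    by (simp only: sum_distrib_left sum_distrib_right)
  finally show ?thesis .
qed

lemma trace_W_contraction:
  fixes DV :: "'n::finite \<Rightarrow> real" and D2w D2V :: "'n \<Rightarrow> 'n \<Rightarrow> real"
    and D3w D3V :: "'n \<Rightarrow> 'n \<Rightarrow> 'n \<Rightarrow> real"
  assumes D2w: "\<And>a b. D2w a b = D2w b a" and D2V: "\<And>a b. D2V a b = D2V b a"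
    and D3w: "\<And>a b c. D3w a b c = D3w b a c" "\<And>a b c. D3w a b c = D3w a c b"
    and D3V: "\<And>a b c. D3V a b c = D3V b a c" "\<And>a b c. D3V a b c = D3V a c b"
  shows "(\<Sum>i\<in>UNIV. \<Sum>j\<in>UNIV. (\<Sum>k\<in>UNIV. D3V j i k * D2w k i) * (\<Sum>k\<in>UNIV. DV k * D2w k j))
      + (\<Sum>i\<in>UNIV. \<Sum>j\<in>UNIV. D2V j i * (\<Sum>k\<in>UNIV. (\<Sum>r\<in>UNIV. D2V k r * D2w r i) * D2w k j))
      + (\<Sum>i\<in>UNIV. \<Sum>j\<in>UNIV. D2V j i * (\<Sum>k\<in>UNIV. DV k * D3w k j i))
    = (\<Sum>i\<in>UNIV. \<Sum>k\<in>UNIV. (\<Sum>m\<in>UNIV. D2V i m * D2w m k) * (\<Sum>m\<in>UNIV. D2V k m * D2w m i))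
      + (\<Sum>i\<in>UNIV. (\<Sum>l\<in>UNIV. \<Sum>m\<in>UNIV. (\<Sum>r\<in>UNIV. D3V l m r * D2w r i) * D2w m l
          + D2V l m * D3w m l i) * DV i)"
  using third_hessian_contraction[of D2w D3V DV, OF D2w D3V]
    trace_square_contraction[of D2V D2w, OF D2V D2w] hessian_third_contraction[of D2V D3w DV, OF D2V D3w]
  by (simp add: sum.distrib distrib_right)

text \<open>
  The identity at a single point, in terms of the jets there: Dw, D2w, D3w are the derivatives of w
  (D2w a b standing for the partial derivative in direction b of the one in direction a), DV, D2V,
  D3V those of V at the gradient, Q and DQ the first and second derivatives of P, DA i j the
  derivative of A i j in direction i, and DT the gradient of tr \<W>. The hypotheses on Q and DQ are
  the relation w \<nabla>P = M \<nabla>(V(\<nabla>w)) - P \<nabla>w and its derivative.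
\<close>

lemma divergence_identity_jets:
  fixes Dw DV Q DT :: "'n::finite \<Rightarrow> real" and D2w D2V DQ DA W :: "'n \<Rightarrow> 'n \<Rightarrow> real"
    and D3w D3V :: "'n \<Rightarrow> 'n \<Rightarrow> 'n \<Rightarrow> real"
  assumes D2w: "\<And>a b. D2w a b = D2w b a" and D2V: "\<And>a b. D2V a b = D2V b a"
    and D3w: "\<And>a b c. D3w a b c = D3w b a c" "\<And>a b c. D3w a b c = D3w a c b"
    and D3V: "\<And>a b c. D3V a b c = D3V b a c" "\<And>a b c. D3V a b c = D3V a c b"
    and Q: "\<And>j. w * Q j = M * (\<Sum>k\<in>UNIV. DV k * D2w k j) - p * Dw j"
    and DQ: "\<And>i j. w * DQ i j
      = M * (\<Sum>k\<in>UNIV. (\<Sum>r\<in>UNIV. D2V k r * D2w r i) * D2w k j + DV k * D3w k j i)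
        - Q i * Dw j - p * D2w j i - Q j * Dw i"
    and DA: "\<And>i j. DA i j = (\<Sum>k\<in>UNIV. D3V j i k * D2w k i)"
    and W: "\<And>i k. W i k = (\<Sum>m\<in>UNIV. D2V i m * D2w m k)"
    and DT: "\<And>i. DT i = (\<Sum>l\<in>UNIV. \<Sum>m\<in>UNIV. (\<Sum>r\<in>UNIV. D3V l m r * D2w r i) * D2w m l + D2V l m * D3w m l i)"
  shows "(2 - n) * (\<Sum>i\<in>UNIV. Dw i * (\<Sum>j\<in>UNIV. D2V j i * Q j))
           + w * (\<Sum>i\<in>UNIV. \<Sum>j\<in>UNIV. DA i j * Q j + D2V j i * DQ i j)
       = - n * (\<Sum>i\<in>UNIV. (\<Sum>j\<in>UNIV. D2V j i * Q j) * Dw i) - p * (\<Sum>i\<in>UNIV. W i i)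
         + M * ((\<Sum>i\<in>UNIV. \<Sum>k\<in>UNIV. W i k * W k i) + (\<Sum>i\<in>UNIV. DT i * DV i))
         - p * (\<Sum>i\<in>UNIV. \<Sum>j\<in>UNIV. \<Sum>k\<in>UNIV. Dw j * D3V i j k * D2w i k)"
proof -
  define flux where "flux = (\<Sum>i\<in>UNIV. \<Sum>j\<in>UNIV. D2V j i * Q j * Dw i)"
  have flux_left: "(\<Sum>i\<in>UNIV. Dw i * (\<Sum>j\<in>UNIV. D2V j i * Q j)) = flux"
    and flux_right: "(\<Sum>i\<in>UNIV. (\<Sum>j\<in>UNIV. D2V j i * Q j) * Dw i) = flux"
    unfolding flux_def by (simp_all only: sum_distrib_left sum_distrib_right mult_ac)
  have flux_swap: "(\<Sum>i\<in>UNIV. \<Sum>j\<in>UNIV. D2V j i * Q i * Dw j) = flux"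
    unfolding flux_def by (subst sum.swap) (simp add: D2V mult_ac)
  have "w * (\<Sum>i\<in>UNIV. \<Sum>j\<in>UNIV. DA i j * Q j + D2V j i * DQ i j)
      = (\<Sum>i\<in>UNIV. \<Sum>j\<in>UNIV. DA i j * (w * Q j) + D2V j i * (w * DQ i j))"
    by (simp add: sum_distrib_left algebra_simps)
  also have "\<dots> = M * ((\<Sum>i\<in>UNIV. \<Sum>j\<in>UNIV. DA i j * (\<Sum>k\<in>UNIV. DV k * D2w k j))
        + (\<Sum>i\<in>UNIV. \<Sum>j\<in>UNIV. D2V j i * (\<Sum>k\<in>UNIV. (\<Sum>r\<in>UNIV. D2V k r * D2w r i) * D2w k j))
        + (\<Sum>i\<in>UNIV. \<Sum>j\<in>UNIV. D2V j i * (\<Sum>k\<in>UNIV. DV k * D3w k j i)))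
      - p * (\<Sum>i\<in>UNIV. \<Sum>j\<in>UNIV. DA i j * Dw j)
      - (\<Sum>i\<in>UNIV. \<Sum>j\<in>UNIV. D2V j i * Q i * Dw j)
      - p * (\<Sum>i\<in>UNIV. \<Sum>j\<in>UNIV. D2V j i * D2w j i) - flux"
    unfolding Q DQ flux_def
    by (simp add: algebra_simps sum.distrib sum_subtractf sum_distrib_left)
  also have "\<dots> = M * ((\<Sum>i\<in>UNIV. \<Sum>k\<in>UNIV. W i k * W k i) + (\<Sum>i\<in>UNIV. DT i * DV i))
      - p * (\<Sum>i\<in>UNIV. \<Sum>j\<in>UNIV. \<Sum>k\<in>UNIV. Dw j * D3V i j k * D2w i k)
      - p * (\<Sum>i\<in>UNIV. W i i) - 2 * flux"
  proof -
    have "(\<Sum>i\<in>UNIV. \<Sum>j\<in>UNIV. DA i j * Dw j)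
        = (\<Sum>i\<in>UNIV. \<Sum>j\<in>UNIV. \<Sum>k\<in>UNIV. Dw j * D3V i j k * D2w i k)"
      unfolding DA by (simp add: sum_distrib_right sum_distrib_left D3V(1)[of _ _] D2w[of _ _] mult_ac)
    moreover have "(\<Sum>i\<in>UNIV. \<Sum>j\<in>UNIV. D2V j i * D2w j i) = (\<Sum>i\<in>UNIV. W i i)"
      unfolding W by (simp add: D2V)
    ultimately show ?thesis
      using flux_swap unfolding DA W DT trace_W_contraction[OF D2w D2V D3w D3V] by simp
  qed
  finally show ?thesis
    unfolding flux_left flux_right by (simp add: algebra_simps)
qed

section \<open>The divergence identity\<close>

lemma sum_pd_powr_mult:
  assumes "w x > 0" "\<And>i. has_partial_deriv i w x (Dw i)" "\<And>i. has_partial_deriv i (F i) x (DF i)"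
  shows "(\<Sum>i\<in>UNIV. pd i (\<lambda>y. w y powr e * F i y) x)
       = w x powr (e - 1) * (e * (\<Sum>i\<in>UNIV. Dw i * F i x) + w x * (\<Sum>i\<in>UNIV. DF i))"
proof -
  have "pd i (\<lambda>y. w y powr e * F i y) x = e * w x powr (e - 1) * Dw i * F i x + w x powr e * DF i" for i
    by (rule pd_eqI, rule has_partial_deriv_mult[OF has_partial_deriv_powr[OF assms(2,1)] assms(3)])
  moreover have "w x powr e = w x powr (e - 1) * w x"
    using assms(1) powr_add[of "w x" "e - 1" 1] by simp
  ultimately show ?thesis
    by (simp add: sum_distrib_left sum.distrib algebra_simps)
qed

definition regular_points :: "(real^'n::finite) set \<Rightarrow> (real^'n \<Rightarrow> real) \<Rightarrow> (real^'n) set" where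
  "regular_points \<Omega> w = {y \<in> \<Omega>. grad w y \<noteq> 0}"

lemma regular_pointsD:
  "y \<in> regular_points \<Omega> w \<Longrightarrow> y \<in> \<Omega>"
  "y \<in> regular_points \<Omega> w \<Longrightarrow> grad w y \<noteq> 0"
  by (simp_all add: regular_points_def)

context
  fixes \<Omega> :: "(real^'n::finite) set" and w V P :: "real^'n \<Rightarrow> real" and M c :: real
  assumes open_dom: "open \<Omega>" and w_C3: "Ck 3 w \<Omega>" and w_pos: "\<forall>y\<in>\<Omega>. w y > 0"
    and V_C3: "Ck 3 V (UNIV - {0})"
    and P_def: "\<And>y. P y = M / w y * V (grad w y) + c / w y"
begin

lemma open_regular_points: "open (regular_points \<Omega> w)"
proof -
  have "continuous_on \<Omega> (\<lambda>y. grad w y)"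
    unfolding grad_def
    by (intro continuous_on_vec_lambda Ck_continuous_on[OF Ck_pd[OF w_C3]]) simp
  then have "open (\<Omega> \<inter> (\<lambda>y. grad w y) -` (UNIV - {0}))"
    using open_dom by (intro continuous_open_preimage) auto
  moreover have "\<Omega> \<inter> (\<lambda>y. grad w y) -` (UNIV - {0}) = regular_points \<Omega> w"
    by (auto simp: regular_points_def)
  ultimately show ?thesis by simp
qed

lemma w_pd_C2: "Ck 2 (pd i w) \<Omega>"
  using Ck_pd[OF w_C3, of i] by simp

lemma w_pd2_C1: "Ck 1 (pd j (pd i w)) \<Omega>"
  using Ck_pd[OF w_pd_C2, of j] by simp

lemma V_pd_C2: "Ck 2 (pd i V) (UNIV - {0})"
  using Ck_pd[OF V_C3, of i] by simp

lemma V_pd2_C1: "Ck 1 (pd j (pd i V)) (UNIV - {0})"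
  using Ck_pd[OF V_pd_C2, of j] by simp

lemma has_partial_deriv_comp_grad:
  assumes "Ck k F (UNIV - {0})" "0 < k" "y \<in> regular_points \<Omega> w"
  shows "has_partial_deriv i (\<lambda>z. F (grad w z)) y (\<Sum>m\<in>UNIV. pd m F (grad w y) * pd i (pd m w) y)"
proof (rule has_partial_deriv_chain)
  show "(F has_derivative (\<lambda>h. \<Sum>m\<in>UNIV. h $ m * pd m F (grad w y))) (at (grad w y))"
    using assms(1,2) regular_pointsD[OF assms(3)] by (intro Ck_has_derivative) auto
  show "has_partial_deriv i (\<lambda>z. grad w z $ m) y (pd i (pd m w) y)" for m
    unfolding grad_def using Ck_has_partial_deriv[OF w_pd_C2] regular_pointsD[OF assms(3)] by simp
qed

lemma has_partial_deriv_P: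
  assumes "y \<in> regular_points \<Omega> w"
  shows "has_partial_deriv j P y
    ((M * (\<Sum>k\<in>UNIV. pd k V (grad w y) * pd j (pd k w) y) - P y * pd j w y) / w y)"
proof -
  let ?S = "\<Sum>k\<in>UNIV. pd k V (grad w y) * pd j (pd k w) y"
  have y: "y \<in> \<Omega>" "w y > 0"
    using w_pos regular_pointsD[OF assms] by auto
  have "has_partial_deriv j (\<lambda>y. M * V (grad w y) + c) y (M * ?S + 0)"
    using has_partial_deriv_comp_grad[OF V_C3 _ assms]
    by (intro has_partial_deriv_add has_partial_deriv_cmult has_partial_deriv_const) simp
  from has_partial_deriv_divide[OF this Ck_has_partial_deriv[OF w_C3 _ y(1)]]
  have "has_partial_deriv j (\<lambda>y. (M * V (grad w y) + c) / w y) y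
      (((M * ?S + 0) * w y - (M * V (grad w y) + c) * pd j w y) / (w y * w y))"
    using y(2) by simp
  moreover have "(\<lambda>y. (M * V (grad w y) + c) / w y) = P"
    by (simp add: fun_eq_iff P_def add_divide_distrib)
  moreover have "((M * ?S + 0) * w y - (M * V (grad w y) + c) * pd j w y) / (w y * w y)
      = (M * ?S - P y * pd j w y) / w y"
    using y(2) by (simp add: P_def field_simps)
  ultimately show ?thesis by simp
qed

lemma w_mult_pd_P:
  assumes "y \<in> regular_points \<Omega> w"
  shows "w y * pd j P y = M * (\<Sum>k\<in>UNIV. pd k V (grad w y) * pd j (pd k w) y) - P y * pd j w y"
proof -
  have "w y \<noteq> 0"
    using w_pos regular_pointsD(1)[OF assms] by auto
  then show ?thesis
    using pd_eqI[OF has_partial_deriv_P[OF assms]] by simp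
qed

lemma has_partial_deriv_pd_P:
  assumes x: "x \<in> regular_points \<Omega> w"
  shows "has_partial_deriv i (pd j P) x (pd i (pd j P) x)"
    and "w x * pd i (pd j P) x
      = M * (\<Sum>k\<in>UNIV. (\<Sum>r\<in>UNIV. pd r (pd k V) (grad w x) * pd i (pd r w) x) * pd j (pd k w) x
                         + pd k V (grad w x) * pd i (pd j (pd k w)) x)
        - pd i P x * pd j w x - P x * pd i (pd j w) x - pd j P x * pd i w x"
proof -
  define S where "S y = (\<Sum>k\<in>UNIV. pd k V (grad w y) * pd j (pd k w) y)" for y
  define DS where "DS = (\<Sum>k\<in>UNIV. (\<Sum>r\<in>UNIV. pd r (pd k V) (grad w x) * pd i (pd r w) x) * pd j (pd k w) x
                         + pd k V (grad w x) * pd i (pd j (pd k w)) x)"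
  define N where "N y = M * S y - P y * pd j w y" for y
  define DN where "DN = M * DS - (pd i P x * pd j w x + P x * pd i (pd j w) x)"
  have x_dom: "x \<in> \<Omega>" "w x > 0"
    using w_pos regular_pointsD[OF x] by auto
  have pd_P: "pd j P y = N y / w y" if "y \<in> regular_points \<Omega> w" for y
    using pd_eqI[OF has_partial_deriv_P[OF that]] by (simp add: N_def S_def)
  have "has_partial_deriv i S x DS"
    unfolding S_def DS_def using x x_dom(1)
    by (intro has_partial_deriv_sum has_partial_deriv_mult has_partial_deriv_comp_grad[OF V_pd_C2]
        Ck_has_partial_deriv[OF w_pd2_C1]) auto
  then have "has_partial_deriv i N x DN"
    unfolding N_def DN_def using x_dom(1) has_partial_deriv_P[OF x] pd_eqI[OF has_partial_deriv_P[OF x]]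
    by (intro has_partial_deriv_diff has_partial_deriv_cmult has_partial_deriv_mult
        Ck_has_partial_deriv[OF w_pd_C2]) auto
  then have "has_partial_deriv i (\<lambda>y. N y / w y) x ((DN * w x - N x * pd i w x) / (w x * w x))"
    using x_dom by (intro has_partial_deriv_divide Ck_has_partial_deriv[OF w_C3]) auto
  then have D: "has_partial_deriv i (pd j P) x ((DN * w x - N x * pd i w x) / (w x * w x))"
    by (rule has_partial_deriv_transform_within_open[OF _ open_regular_points x]) (simp add: pd_P)
  then show "has_partial_deriv i (pd j P) x (pd i (pd j P) x)"
    by (simp add: pd_eqI)
  have "w x * ((DN * w x - N x * pd i w x) / (w x * w x)) = DN - N x / w x * pd i w x"
    using x_dom(2) by (simp add: field_simps)
  then show "w x * pd i (pd j P) x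
      = M * DS - pd i P x * pd j w x - P x * pd i (pd j w) x - pd j P x * pd i w x"
    using pd_eqI[OF D] pd_P[OF x] by (simp add: DN_def)
qed

lemma w_pd_commute:
  assumes "y \<in> \<Omega>"
  shows "pd j (pd i w) y = pd i (pd j w) y"
    and "pd k (pd j (pd i w)) y = pd k (pd i (pd j w)) y"
    and "pd k (pd j (pd i w)) y = pd j (pd k (pd i w)) y"
  using Ck_pd_commute[OF w_C3 _ open_dom assms] Ck_pd3_commute[OF w_C3 _ open_dom assms]
    Ck_pd_commute[OF w_pd_C2 _ open_dom assms] by simp_all

lemma V_pd_commute:
  assumes "\<xi> \<noteq> 0"
  shows "pd j (pd i V) \<xi> = pd i (pd j V) \<xi>"
    and "pd k (pd j (pd i V)) \<xi> = pd k (pd i (pd j V)) \<xi>"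
    and "pd k (pd j (pd i V)) \<xi> = pd j (pd k (pd i V)) \<xi>"
proof -
  have "open (UNIV - {0 :: real^'n})" "\<xi> \<in> UNIV - {0}"
    using assms by (simp_all add: open_Diff)
  then show "pd j (pd i V) \<xi> = pd i (pd j V) \<xi>"
    and "pd k (pd j (pd i V)) \<xi> = pd k (pd i (pd j V)) \<xi>"
    and "pd k (pd j (pd i V)) \<xi> = pd j (pd k (pd i V)) \<xi>"
    using Ck_pd_commute[OF V_C3] Ck_pd3_commute[OF V_C3] Ck_pd_commute[OF V_pd_C2] by simp_all
qed

lemma pd_comp_grad:
  assumes "Ck k F (UNIV - {0})" "0 < k" "y \<in> regular_points \<Omega> w"
  shows "pd i (\<lambda>z. F (grad w z)) y = (\<Sum>m\<in>UNIV. pd m F (grad w y) * pd i (pd m w) y)"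
  using has_partial_deriv_comp_grad[OF assms] by (rule pd_eqI)

lemma pd_trace_W:
  assumes x: "x \<in> regular_points \<Omega> w"
  shows "pd i (\<lambda>z. \<Sum>l\<in>UNIV. pd l (\<lambda>y. pd l V (grad w y)) z) x
    = (\<Sum>l\<in>UNIV. \<Sum>m\<in>UNIV. (\<Sum>r\<in>UNIV. pd r (pd m (pd l V)) (grad w x) * pd i (pd r w) x) * pd l (pd m w) x
        + pd m (pd l V) (grad w x) * pd i (pd l (pd m w)) x)"
proof (rule pd_eqI)
  have "has_partial_deriv i (\<lambda>z. \<Sum>l\<in>UNIV. \<Sum>m\<in>UNIV. pd m (pd l V) (grad w z) * pd l (pd m w) z) x
    (\<Sum>l\<in>UNIV. \<Sum>m\<in>UNIV. (\<Sum>r\<in>UNIV. pd r (pd m (pd l V)) (grad w x) * pd i (pd r w) x) * pd l (pd m w) x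
        + pd m (pd l V) (grad w x) * pd i (pd l (pd m w)) x)"
    using x regular_pointsD(1)[OF x]
    by (intro has_partial_deriv_sum has_partial_deriv_mult has_partial_deriv_comp_grad[OF V_pd2_C1]
        Ck_has_partial_deriv[OF w_pd2_C1]) auto
  then show "has_partial_deriv i (\<lambda>z. \<Sum>l\<in>UNIV. pd l (\<lambda>y. pd l V (grad w y)) z) x
    (\<Sum>l\<in>UNIV. \<Sum>m\<in>UNIV. (\<Sum>r\<in>UNIV. pd r (pd m (pd l V)) (grad w x) * pd i (pd r w) x) * pd l (pd m w) x
        + pd m (pd l V) (grad w x) * pd i (pd l (pd m w)) x)"
    by (rule has_partial_deriv_transform_within_open[OF _ open_regular_points x])
      (simp add: pd_comp_grad[OF V_pd_C2])
qed

lemma sum_pd_weighted_flux: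
  assumes x: "x \<in> regular_points \<Omega> w"
  shows "(\<Sum>i\<in>UNIV. pd i (\<lambda>y. w y powr (2 - n) * (\<Sum>j\<in>UNIV. pd i (pd j V) (grad w y) * pd j P y)) x)
    = w x powr (1 - n) * ((2 - n) * (\<Sum>i\<in>UNIV. pd i w x * (\<Sum>j\<in>UNIV. pd i (pd j V) (grad w x) * pd j P x))
      + w x * (\<Sum>i\<in>UNIV. \<Sum>j\<in>UNIV.
          (\<Sum>k\<in>UNIV. pd k (pd i (pd j V)) (grad w x) * pd i (pd k w) x) * pd j P x
          + pd i (pd j V) (grad w x) * pd i (pd j P) x))"
proof -
  have x_dom: "x \<in> \<Omega>" "w x > 0"
    using w_pos regular_pointsD[OF x] by auto
  have "has_partial_deriv i (\<lambda>y. \<Sum>j\<in>UNIV. pd i (pd j V) (grad w y) * pd j P y) x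
      (\<Sum>j\<in>UNIV. (\<Sum>k\<in>UNIV. pd k (pd i (pd j V)) (grad w x) * pd i (pd k w) x) * pd j P x
        + pd i (pd j V) (grad w x) * pd i (pd j P) x)" for i
    using has_partial_deriv_comp_grad[OF V_pd2_C1 _ x] has_partial_deriv_pd_P(1)[OF x]
    by (intro has_partial_deriv_sum has_partial_deriv_mult) auto
  from sum_pd_powr_mult[OF x_dom(2) Ck_has_partial_deriv[OF w_C3 _ x_dom(1)] this, where e = "2 - n"]
  show ?thesis by simp
qed

lemma weighted_divergence_identity:
  fixes a :: "'n \<Rightarrow> real^'n \<Rightarrow> real" and A W :: "'n \<Rightarrow> 'n \<Rightarrow> real^'n \<Rightarrow> real"
  assumes a_def: "\<And>i y. a i y = pd i V (grad w y)"
    and A_def: "\<And>i j y. A i j y = pd i (pd j V) (grad w y)"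
    and W_def: "\<And>i k y. W i k y = pd k (a i) y"
    and x: "x \<in> regular_points \<Omega> w"
  shows "(\<Sum>i\<in>UNIV. pd i (\<lambda>y. w y powr (2 - n) * (\<Sum>j\<in>UNIV. A i j y * pd j P y)) x)
       = w x powr (1 - n) *
         ( - n * (\<Sum>i\<in>UNIV. (\<Sum>j\<in>UNIV. A i j x * pd j P x) * pd i w x)
           - P x * (\<Sum>i\<in>UNIV. W i i x)
           + M * ((\<Sum>i\<in>UNIV. \<Sum>k\<in>UNIV. W i k x * W k i x)
                  + (\<Sum>i\<in>UNIV. pd i (\<lambda>y. \<Sum>l\<in>UNIV. W l l y) x * a i x))
           - P x * (\<Sum>i\<in>UNIV. \<Sum>j\<in>UNIV. \<Sum>k\<in>UNIV.
                      pd j w x * pd k (pd j (pd i V)) (grad w x) * pd k (pd i w) x))"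
proof -
  note x_dom = regular_pointsD[OF x]
  have a_fun: "a i = (\<lambda>y. pd i V (grad w y))" for i
    by (simp add: fun_eq_iff a_def)
  have W_x: "W i k x = (\<Sum>m\<in>UNIV. pd m (pd i V) (grad w x) * pd k (pd m w) x)" for i k
    unfolding W_def a_fun by (rule pd_comp_grad[OF V_pd_C2 _ x]) simp
  have trace_W: "pd i (\<lambda>y. \<Sum>l\<in>UNIV. W l l y) x
    = (\<Sum>l\<in>UNIV. \<Sum>m\<in>UNIV. (\<Sum>r\<in>UNIV. pd r (pd m (pd l V)) (grad w x) * pd i (pd r w) x) * pd l (pd m w) x
        + pd m (pd l V) (grad w x) * pd i (pd l (pd m w)) x)" for i
    unfolding W_def a_fun by (rule pd_trace_W[OF x])
  note jets = divergence_identity_jets[where w = "w x" and Dw = "\<lambda>k. pd k w x"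
      and D2w = "\<lambda>a b. pd b (pd a w) x" and D3w = "\<lambda>a b c. pd c (pd b (pd a w)) x"
      and DV = "\<lambda>k. pd k V (grad w x)" and D2V = "\<lambda>a b. pd b (pd a V) (grad w x)"
      and D3V = "\<lambda>a b c. pd c (pd b (pd a V)) (grad w x)"
      and Q = "\<lambda>j. pd j P x" and DQ = "\<lambda>i j. pd i (pd j P) x"
      and DA = "\<lambda>i j. \<Sum>k\<in>UNIV. pd k (pd i (pd j V)) (grad w x) * pd i (pd k w) x"
      and W = "\<lambda>i k. W i k x" and DT = "\<lambda>i. pd i (\<lambda>y. \<Sum>l\<in>UNIV. W l l y) x",
      OF w_pd_commute(1)[OF x_dom(1)] V_pd_commute(1)[OF x_dom(2)]
        w_pd_commute(2,3)[OF x_dom(1)] V_pd_commute(2,3)[OF x_dom(2)]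
        w_mult_pd_P[OF x] has_partial_deriv_pd_P(2)[OF x] refl W_x trace_W]
  show ?thesis
    unfolding A_def a_def sum_pd_weighted_flux[OF x] jets ..
qed

end

theorem proposition3p1:
  fixes p :: real and \<Omega> :: "(real^'n) set"
    and w :: "real^'n \<Rightarrow> real" and V :: "real^'n \<Rightarrow> real"
    and P :: "real^'n \<Rightarrow> real"
    and a :: "'n \<Rightarrow> real^'n \<Rightarrow> real"
    and A :: "'n \<Rightarrow> 'n \<Rightarrow> real^'n \<Rightarrow> real"
    and W :: "'n \<Rightarrow> 'n \<Rightarrow> real^'n \<Rightarrow> real"
    and x :: "real^'n"
  assumes "1 < p" and "p < real CARD('n)"
    and "open \<Omega>"
    and "Ck 3 w \<Omega>" and "\<forall>y\<in>\<Omega>. w y > 0"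
    and "\<forall>\<xi>. V \<xi> \<ge> 0" and "Ck 3 V (UNIV - {0})"
    and P_def: "\<And>y. P y = real CARD('n) * (p - 1) / w y * V (grad w y)
                          + (p / (real CARD('n) - p)) powr (p - 1) / w y"
    and a_def: "\<And>i y. a i y = pd i V (grad w y)"
    and A_def: "\<And>i j y. A i j y = pd i (pd j V) (grad w y)"
    and W_def: "\<And>i k y. W i k y = pd k (a i) y"
    and "x \<in> \<Omega>" and "grad w x \<noteq> 0"
  shows "(\<Sum>i\<in>UNIV. pd i (\<lambda>y. w y powr (2 - real CARD('n)) * (\<Sum>j\<in>UNIV. A i j y * pd j P y)) x)
       = w x powr (1 - real CARD('n)) *
         ( - real CARD('n) * (\<Sum>i\<in>UNIV. (\<Sum>j\<in>UNIV. A i j x * pd j P x) * pd i w x)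
           - P x * (\<Sum>i\<in>UNIV. W i i x)
           + real CARD('n) * (p - 1) *
               ((\<Sum>i\<in>UNIV. \<Sum>k\<in>UNIV. W i k x * W k i x)
                + (\<Sum>i\<in>UNIV. pd i (\<lambda>y. \<Sum>l\<in>UNIV. W l l y) x * a i x))
           - P x * (\<Sum>i\<in>UNIV. \<Sum>j\<in>UNIV. \<Sum>k\<in>UNIV.
                      pd j w x * pd k (pd j (pd i V)) (grad w x) * pd k (pd i w) x))"
proof -
  \<comment> \<open>The identity holds for arbitrary constants.\<close>
  have "x \<in> regular_points \<Omega> w"
    using assms(12,13) by (simp add: regular_points_def)
  from weighted_divergence_identity[OF assms(3-5,7) P_def a_def A_def W_def this]
  show ?thesis .
qed

end
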